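(* Let $\mathbb F\in\{\mathbb R,\mathbb C\}$, let $P$ be an $n$-dimensional manifold over $\mathbb F$ with empty boundary, and let $X,Y$ be differentiable (holomorphic if $\mathbb F=\mathbb C$) vector fields on $P$ such that $Y$ tracks $X$. Then $\mathsf Z(X)$ and $\mathsf D(X,Y)$ are both $X$-invariant and $Y$-invariant.
   Context: $Y$ tracks $X$ if $[Y,X]=fX$ for some continuous function $f\colon P\to\mathbb F$. $\mathsf Z(X)$ is the zero set of $X$. The dependency set is $\mathsf D(X,Y)=\{p\in P: X(p)\wedge_{\mathbb F}Y(p)=0\}$, i.e. the set where $X(p),Y(p)$ are linearly dependent over $\mathbb F$. A set $S$ is $Z$-invariant if it contains the orbits under (the local flow of) $Z$ of each of its points. *)

theory Defs
  imports "HOL-Analysis.Analysis"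
begin

text \<open>Ground field F: a type of class real_normed_field (commutative normed division
  algebra over the reals, i.e. essentially real or complex).
  Differentiability is real Frechet differentiability; "over F" means in addition that the
  derivative is F-linear (for F = complex this is holomorphy).\<close>

definition F_linear :: "('f::real_normed_field ^ 'n \<Rightarrow> 'f ^ 'n) \<Rightarrow> bool" where
  "F_linear L \<longleftrightarrow> (\<forall>c v. L (c *s v) = c *s L v)"

coinductive smooth_map_on :: "('a::real_normed_vector) set \<Rightarrow> ('a \<Rightarrow> 'a) \<Rightarrow> bool"
  for S where
  "f differentiable_on S \<Longrightarrow> (\<forall>v. smooth_map_on S (\<lambda>x. frechet_derivative f (at x) v))
     \<Longrightarrow> smooth_map_on S f"

definition F_smooth_on :: "('f::real_normed_field ^ 'n) set \<Rightarrow> ('f ^ 'n \<Rightarrow> 'f ^ 'n) \<Rightarrow> bool" where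
  "F_smooth_on S f \<longleftrightarrow> smooth_map_on S f \<and> (\<forall>x\<in>S. F_linear (frechet_derivative f (at x)))"

definition F_C1_on :: "('f::real_normed_field ^ 'n) set \<Rightarrow> ('f ^ 'n \<Rightarrow> 'f ^ 'n) \<Rightarrow> bool" where
  "F_C1_on S g \<longleftrightarrow> (\<forall>x\<in>S. g differentiable (at x) \<and> F_linear (frechet_derivative g (at x)))
      \<and> (\<forall>v. continuous_on S (\<lambda>x. frechet_derivative g (at x) v))"

definition is_chart :: "('p::topological_space) set \<times> ('p \<Rightarrow> 'f::real_normed_field ^ 'n) \<Rightarrow> bool" where
  "is_chart c \<longleftrightarrow> open (fst c) \<and> open (snd c ` fst c) \<and> inj_on (snd c) (fst c)
     \<and> continuous_on (fst c) (snd c) \<and> continuous_on (snd c ` fst c) (inv_into (fst c) (snd c))"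

definition F_atlas :: "(('p::topological_space) set \<times> ('p \<Rightarrow> 'f::real_normed_field ^ 'n)) set \<Rightarrow> bool" where
  "F_atlas A \<longleftrightarrow> (\<forall>c\<in>A. is_chart c) \<and> (\<Union>c\<in>A. fst c) = UNIV
     \<and> (\<forall>c\<in>A. \<forall>d\<in>A. F_smooth_on (snd c ` (fst c \<inter> fst d)) (snd d \<circ> inv_into (fst c) (snd c)))"

text \<open>A vector field X is given by its coordinate vectors: X p c is the coordinate vector of
  X(p) in the chart c (meaningful for p in the domain of c); they must obey the tangent
  transformation law.\<close>
definition vector_field :: "(('p::topological_space) set \<times> ('p \<Rightarrow> 'f::real_normed_field ^ 'n)) set
     \<Rightarrow> ('p \<Rightarrow> 'p set \<times> ('p \<Rightarrow> 'f ^ 'n) \<Rightarrow> 'f ^ 'n) \<Rightarrow> bool" where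
  "vector_field A X \<longleftrightarrow> (\<forall>c\<in>A. \<forall>d\<in>A. \<forall>p\<in>fst c \<inter> fst d.
      X p d = frechet_derivative (snd d \<circ> inv_into (fst c) (snd c)) (at (snd c p)) (X p c))"

definition local_rep where
  "local_rep X c = (\<lambda>y. X (inv_into (fst c) (snd c) y) c)"

definition diff_vector_field where
  "diff_vector_field A X \<longleftrightarrow> vector_field A X \<and>
     (\<forall>c\<in>A. F_C1_on (snd c ` fst c) (local_rep X c))"

text \<open>Coordinate vector of the Lie bracket [Y,X] = YX - XY at p in chart c:
  DX(Y) - DY(X) in local coordinates.\<close>
definition lie_bracket_coord where
  "lie_bracket_coord Y X p c =
     frechet_derivative (local_rep X c) (at (snd c p)) (Y p c)
     - frechet_derivative (local_rep Y c) (at (snd c p)) (X p c)"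

definition tracks where
  "tracks A Y X \<longleftrightarrow> (\<exists>f :: 'p::topological_space \<Rightarrow> 'f::real_normed_field. continuous_on UNIV f \<and>
     (\<forall>c\<in>A. \<forall>p\<in>fst c. lie_bracket_coord Y X p c = f p *s X p (c :: 'p set \<times> ('p \<Rightarrow> 'f ^ 'n))))"

definition zero_set where
  "zero_set A X = {p. \<forall>c\<in>A. p \<in> fst c \<longrightarrow> X p c = 0}"

definition dep_set where
  "dep_set A X Y = {p. \<forall>c\<in>A. p \<in> fst c \<longrightarrow>
     (\<exists>a b :: 'f::real_normed_field. (a, b) \<noteq> (0, 0) \<and> a *s X p c + b *s Y p (c :: _ \<times> (_ \<Rightarrow> 'f ^ 'n)) = 0)}"

definition integral_curve where
  "integral_curve A X \<gamma> J \<longleftrightarrow> is_interval J \<and> continuous_on J \<gamma> \<and>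
     (\<forall>t\<in>J. \<forall>c\<in>A. \<gamma> t \<in> fst c \<longrightarrow>
        ((snd c \<circ> \<gamma>) has_vector_derivative X (\<gamma> t) c) (at t within J))"

text \<open>S is X-invariant: it contains the orbit of each of its points under the local flow of X,
  i.e. every integral curve (of real time) passing through a point of S stays in S.\<close>
definition invariant where
  "invariant A X S \<longleftrightarrow> (\<forall>\<gamma> (J :: real set). integral_curve A X \<gamma> J \<and> 0 \<in> J \<and> \<gamma> 0 \<in> S
     \<longrightarrow> \<gamma> ` J \<subseteq> S)"

end

theory Submission
  imports Defs
begin

(* Read along an integral curve of V in a chart, the coordinate vectors x = X and y = Y
   satisfy x' = DX(V) and y' = DY(V), while tracking gives DX(y) - DY(x) = f x.  Hence
   x' = p x + B x and y' = r x + B y, with (p, r, B) = (0, -f, DX) for V = X and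
   (f, 0, DY) for V = Y.  So x solves a linear equation, and so does the wedge x \<and> y
   (the 2x2 minors of (x, y)), because the r x \<and> x term vanishes.  A Gronwall-type
   argument shows that zero is propagated by such equations, so X = 0 and X \<and> Y = 0
   are preserved inside each chart; connectedness of the time interval globalises this. *)

lemma derivative_norm_bounded_zero_local:
  fixes w :: "real \<Rightarrow> 'a::real_normed_vector"
  assumes "compact C" "convex C" "s \<in> C" "C \<subseteq> cball s d" "K \<ge> 0" "K * d \<le> 1 / 2"
    and w': "\<And>t. t \<in> C \<Longrightarrow> (w has_vector_derivative w' t) (at t within C)"
    and K: "\<And>t. t \<in> C \<Longrightarrow> norm (w' t) \<le> K * norm (w t)"
    and "w s = 0" "y \<in> C"
  shows "w y = 0"
proof -
  (* m = max |w| over C satisfies m \<le> K d m \<le> m / 2 by the mean value bound from the zero s *)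
  have "continuous_on C (\<lambda>y. norm (w y))"
    using continuous_on_vector_derivative[OF w'] by (intro continuous_intros)
  then obtain u where "u \<in> C" and max: "\<And>y. y \<in> C \<Longrightarrow> norm (w y) \<le> norm (w u)"
    using continuous_attains_sup[of C "\<lambda>y. norm (w y)"] assms(1,3) by blast
  have "w' s = 0"
    using K[OF \<open>s \<in> C\<close>] \<open>w s = 0\<close> by simp
  have "norm (w y) \<le> norm (w u) / 2" if "y \<in> C" for y
  proof -
    have "norm (w y - w s - (y - s) *\<^sub>R w' s) \<le> norm (y - s) * (K * norm (w u))"
    proof (rule vector_differentiable_bound_linearization[of C])
      show "closed_segment s y \<subseteq> C"
        using \<open>s \<in> C\<close> \<open>y \<in> C\<close> \<open>convex C\<close> by (rule closed_segment_subset)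
      fix x assume "x \<in> C"
      then show "(w has_vector_derivative w' x) (at x within C)" by (rule w')
      show "norm (w' x - w' s) \<le> K * norm (w u)"
        using K[OF \<open>x \<in> C\<close>] max[OF \<open>x \<in> C\<close>] \<open>w' s = 0\<close> \<open>K \<ge> 0\<close>
        by (auto intro: order_trans[OF _ mult_left_mono])
    qed (use \<open>s \<in> C\<close> in simp)
    moreover have "norm (y - s) \<le> d"
      using \<open>y \<in> C\<close> assms(4) by (auto simp: dist_norm abs_minus_commute)
    ultimately have "norm (w y) \<le> d * (K * norm (w u))"
      using \<open>w s = 0\<close> \<open>w' s = 0\<close> \<open>K \<ge> 0\<close> by (auto intro: order_trans[OF _ mult_right_mono])
    also have "\<dots> \<le> norm (w u) / 2"
      using mult_right_mono[OF \<open>K * d \<le> 1 / 2\<close> norm_ge_zero[of "w u"]] by (simp add: ac_simps)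
    finally show ?thesis .
  qed
  from this[OF \<open>u \<in> C\<close>] have "norm (w u) = 0" by simp
  then show ?thesis using max[OF \<open>y \<in> C\<close>] by simp
qed

lemma derivative_norm_bounded_zero:
  fixes w :: "real \<Rightarrow> 'a::real_normed_vector"
  assumes "compact I" "convex I"
    and w': "\<And>t. t \<in> I \<Longrightarrow> (w has_vector_derivative w' t) (at t within I)"
    and K: "\<And>t. t \<in> I \<Longrightarrow> norm (w' t) \<le> K * norm (w t)"
    and "t0 \<in> I" "w t0 = 0" "t \<in> I"
  shows "w t = 0"
proof -
  define d where "d = 1 / (2 * (\<bar>K\<bar> + 1))"
  have "d > 0" "\<bar>K\<bar> * d \<le> 1 / 2" by (simp_all add: d_def field_simps add_pos_nonneg)
  define Z where "Z = {s \<in> I. w s = 0}"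
  have "closedin (top_of_set I) Z"
    unfolding Z_def using continuous_on_vector_derivative[OF w']
    by (rule continuous_closedin_preimage_constant)
  moreover have "I \<inter> cball s d \<subseteq> Z" if "s \<in> Z" for s
  proof
    fix y assume y: "y \<in> I \<inter> cball s d"
    have "w y = 0"
    proof (rule derivative_norm_bounded_zero_local[where K = "\<bar>K\<bar>" and w' = w'])
      show "compact (I \<inter> cball s d)" "convex (I \<inter> cball s d)"
        using assms(1,2) by (simp_all add: compact_Int_closed convex_Int)
      show "s \<in> I \<inter> cball s d" "w s = 0" using \<open>s \<in> Z\<close> \<open>d > 0\<close> by (simp_all add: Z_def)
      fix t assume t: "t \<in> I \<inter> cball s d"
      then show "(w has_vector_derivative w' t) (at t within I \<inter> cball s d)"
        by (blast intro: has_vector_derivative_within_subset[OF w'])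
      have "K * norm (w t) \<le> \<bar>K\<bar> * norm (w t)" by (simp add: mult_right_mono)
      then show "norm (w' t) \<le> \<bar>K\<bar> * norm (w t)" using K t by force
    qed (use y \<open>\<bar>K\<bar> * d \<le> 1 / 2\<close> in auto)
    then show "y \<in> Z" using y by (simp add: Z_def)
  qed
  then have "openin (top_of_set I) Z"
    unfolding openin_euclidean_subtopology_iff
    using \<open>d > 0\<close> by (auto simp: Z_def dist_commute subset_iff)
  ultimately have "Z = {} \<or> Z = I"
    using convex_connected[OF \<open>convex I\<close>] unfolding connected_clopen by blast
  then show ?thesis
    using assms(5-7) by (auto simp: Z_def)
qed

lemma norm_vector_smult:
  fixes x :: "'a::real_normed_div_algebra ^ 'n"
  shows "norm (c *s x) = norm c * norm x"
  by (simp add: norm_vec_def norm_mult L2_set_right_distrib)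

lemma F_linear_expansion:
  fixes L :: "'f::real_normed_field ^ 'n \<Rightarrow> 'f ^ 'n"
  assumes "linear L" "F_linear L"
  shows "L v = (\<Sum>k\<in>UNIV. v $ k *s L (axis k 1))"
proof -
  have "L v = L (\<Sum>k\<in>UNIV. v $ k *s axis k 1)" by (simp add: basis_expansion)
  also have "\<dots> = (\<Sum>k\<in>UNIV. v $ k *s L (axis k 1))"
    using assms by (simp add: linear_sum F_linear_def)
  finally show ?thesis .
qed

lemma norm_F_linear_le:
  fixes L :: "'f::real_normed_field ^ 'n \<Rightarrow> 'f ^ 'n"
  assumes "linear L" "F_linear L"
  shows "norm (L v) \<le> norm v * (\<Sum>k\<in>UNIV. norm (L (axis k 1)))"
proof -
  have "norm (L v) \<le> (\<Sum>k\<in>UNIV. norm (v $ k) * norm (L (axis k 1)))"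
    unfolding F_linear_expansion[OF assms, of v]
    by (rule order_trans[OF norm_sum]) (simp add: norm_vector_smult)
  also have "\<dots> \<le> (\<Sum>k\<in>UNIV. norm v * norm (L (axis k 1)))"
    (* the unqualified norm_nth_le is the euclidean_space version *)
    by (intro sum_mono mult_right_mono norm_ge_zero) (rule Finite_Cartesian_Product.norm_nth_le)
  finally show ?thesis by (simp add: sum_distrib_left)
qed

definition F_linear_family_on ::
    "real set \<Rightarrow> (real \<Rightarrow> 'f::real_normed_field ^ 'n \<Rightarrow> 'f ^ 'n) \<Rightarrow> bool" where
  "F_linear_family_on I A \<longleftrightarrow>
     (\<forall>t\<in>I. linear (A t) \<and> F_linear (A t)) \<and> (\<forall>v. continuous_on I (\<lambda>t. A t v))"

lemma linear_ode_zero: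
  fixes w :: "real \<Rightarrow> 'f::real_normed_field ^ 'n"
  assumes "compact I" "convex I" "continuous_on I p" and A: "F_linear_family_on I A"
    and w': "\<And>t. t \<in> I \<Longrightarrow> (w has_vector_derivative p t *s w t + A t (w t)) (at t within I)"
    and "t0 \<in> I" "w t0 = 0" "t \<in> I"
  shows "w t = 0"
proof -
  let ?a = "\<lambda>t. norm (p t) + (\<Sum>k\<in>UNIV. norm (A t (axis k 1)))"
  have "continuous_on I ?a"
    using \<open>continuous_on I p\<close> A by (auto simp: F_linear_family_on_def intro!: continuous_intros)
  then have "bounded (?a ` I)"
    using \<open>compact I\<close> by (intro compact_imp_bounded compact_continuous_image)
  then obtain K where K: "\<And>t. t \<in> I \<Longrightarrow> ?a t \<le> K"
    unfolding bounded_real by (auto dest: abs_le_D1)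
  show ?thesis
  proof (rule derivative_norm_bounded_zero[OF \<open>compact I\<close> \<open>convex I\<close> w' _ assms(6-8)])
    fix t assume "t \<in> I"
    have "norm (p t *s w t + A t (w t)) \<le> norm (p t) * norm (w t) + norm (w t) * (\<Sum>k\<in>UNIV. norm (A t (axis k 1)))"
      using A \<open>t \<in> I\<close> norm_F_linear_le[of "A t" "w t"]
      by (auto simp: F_linear_family_on_def norm_vector_smult intro: norm_triangle_le)
    also have "\<dots> = ?a t * norm (w t)" by (simp add: algebra_simps)
    also have "\<dots> \<le> K * norm (w t)" by (intro mult_right_mono K \<open>t \<in> I\<close> norm_ge_zero)
    finally show "norm (p t *s w t + A t (w t)) \<le> K * norm (w t)" .
  qed
qed

lemma has_vector_derivative_vec_lambda:
  fixes f :: "real \<Rightarrow> 'a::real_normed_vector ^ 'n"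
  assumes "\<And>i. ((\<lambda>t. f t $ i) has_vector_derivative f' $ i) (at t within S)"
  shows "(f has_vector_derivative f') (at t within S)"
proof -
  let ?q = "\<lambda>g g' s. (1 / norm (s - t)) *\<^sub>R (g s - (g t + (s - t) *\<^sub>R g'))"
  have "((\<lambda>s. \<chi> i. ?q (\<lambda>s. f s $ i) (f' $ i) s) \<longlongrightarrow> (\<chi> i. 0)) (at t within S)"
    using assms unfolding has_vector_derivative_def has_derivative_within
    by (intro tendsto_vec_lambda) auto
  moreover have "(\<lambda>s. \<chi> i. ?q (\<lambda>s. f s $ i) (f' $ i) s) = ?q f f'"
    by (simp add: fun_eq_iff vec_eq_iff)
  ultimately show ?thesis
    unfolding has_vector_derivative_def has_derivative_within
    by (simp add: bounded_linear_scaleR_left zero_vec_def)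
qed

definition wedge :: "'a::comm_ring ^ 'n \<Rightarrow> 'a ^ 'n \<Rightarrow> 'a ^ ('n \<times> 'n)" where
  "wedge x y = vec_lambda (\<lambda>(i, j). x $ i * y $ j - x $ j * y $ i)"

lemma wedge_nth [simp]: "wedge x y $ (i, j) = x $ i * y $ j - x $ j * y $ i"
  by (simp add: wedge_def)

lemma wedge_eq_0_iff_dependent:
  fixes x y :: "'a::field ^ 'n"
  shows "wedge x y = 0 \<longleftrightarrow> (\<exists>a b. (a, b) \<noteq> (0, 0) \<and> a *s x + b *s y = 0)"
proof
  assume wedge: "wedge x y = 0"
  show "\<exists>a b. (a, b) \<noteq> (0, 0) \<and> a *s x + b *s y = 0"
  proof (cases "y = 0")
    case True
    then show ?thesis by (intro exI[of _ 0] exI[of _ 1]) simp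
  next
    case False
    then obtain k where "y $ k \<noteq> 0" by (auto simp: vec_eq_iff)
    moreover have "y $ k * x $ i - x $ k * y $ i = 0" for i
      using arg_cong[OF wedge, of "\<lambda>m. m $ (i, k)"] by (simp add: mult.commute)
    ultimately show ?thesis
      by (intro exI[of _ "y $ k"] exI[of _ "- x $ k"]) (simp add: vec_eq_iff)
  qed
next
  assume "\<exists>a b. (a, b) \<noteq> (0, 0) \<and> a *s x + b *s y = 0"
  then obtain a b where "(a, b) \<noteq> (0, 0)" and comb: "\<And>i. a * x $ i + b * y $ i = 0"
    by (auto simp: vec_eq_iff)
  have ax: "a * x $ i = - (b * y $ i)" and yb: "b * y $ i = - (a * x $ i)" for i
    using comb[of i] by (simp_all add: eq_neg_iff_add_eq_0 add.commute)
  have "a * (x $ i * y $ j - x $ j * y $ i) = 0" for i j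
  proof -
    have "a * (x $ i * y $ j - x $ j * y $ i) = (a * x $ i) * y $ j - (a * x $ j) * y $ i"
      by (simp add: algebra_simps)
    also have "\<dots> = 0" by (simp only: ax) (simp add: algebra_simps)
    finally show ?thesis .
  qed
  moreover have "b * (x $ i * y $ j - x $ j * y $ i) = 0" for i j
  proof -
    have "b * (x $ i * y $ j - x $ j * y $ i) = x $ i * (b * y $ j) - x $ j * (b * y $ i)"
      by (simp add: algebra_simps)
    also have "\<dots> = 0" by (simp only: yb) (simp add: algebra_simps)
    finally show ?thesis .
  qed
  ultimately show "wedge x y = 0"
    using \<open>(a, b) \<noteq> (0, 0)\<close> by (auto simp: vec_eq_iff)
qed

definition wedge_derivation ::
    "('a::comm_ring_1 ^ 'n \<Rightarrow> 'a ^ 'n) \<Rightarrow> 'a ^ ('n \<times> 'n) \<Rightarrow> 'a ^ ('n \<times> 'n)" where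
  "wedge_derivation A m = vec_lambda (\<lambda>(i, j).
     \<Sum>k\<in>UNIV. A (axis k 1) $ i * m $ (k, j) + A (axis k 1) $ j * m $ (i, k))"

lemma wedge_derivation_nth [simp]:
  "wedge_derivation A m $ (i, j) =
     (\<Sum>k\<in>UNIV. A (axis k 1) $ i * m $ (k, j) + A (axis k 1) $ j * m $ (i, k))"
  by (simp add: wedge_derivation_def)

lemma wedge_derivation:
  fixes A :: "'f::real_normed_field ^ 'n \<Rightarrow> 'f ^ 'n"
  assumes "linear A" "F_linear A"
  shows "wedge (A x) y + wedge x (A y) = wedge_derivation A (wedge x y)"
proof -
  define a where "a i k = A (axis k 1) $ i" for i k
  have coord: "A v $ i = (\<Sum>k\<in>UNIV. v $ k * a i k)" for v i
    using arg_cong[OF F_linear_expansion[OF assms, of v], of "\<lambda>w. w $ i"]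
    by (simp add: sum_component a_def)
  have "(wedge (A x) y + wedge x (A y)) $ (i, j) = wedge_derivation A (wedge x y) $ (i, j)" for i j
  proof -
    have "(wedge (A x) y + wedge x (A y)) $ (i, j) = (\<Sum>k\<in>UNIV.
        x $ k * a i k * y $ j - x $ k * a j k * y $ i
        + (x $ i * (y $ k * a j k) - x $ j * (y $ k * a i k)))"
      unfolding vector_add_component wedge_nth coord
      by (simp only: sum_distrib_left sum_distrib_right sum_subtractf sum.distrib)
    also have "\<dots> = (\<Sum>k\<in>UNIV. a i k * wedge x y $ (k, j) + a j k * wedge x y $ (i, k))"
      by (intro sum.cong) (simp_all add: algebra_simps)
    finally show ?thesis by (simp add: a_def)
  qed
  then show ?thesis by (simp add: vec_eq_iff split_paired_all)
qed

lemma F_linear_family_on_wedge_derivation: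
  assumes "F_linear_family_on I A"
  shows "F_linear_family_on I (\<lambda>t. wedge_derivation (A t))"
  unfolding F_linear_family_on_def
proof (intro conjI ballI allI)
  show "linear (wedge_derivation (A t))" for t
    by (rule linearI) (simp_all add: vec_eq_iff split_paired_all algebra_simps sum.distrib
        scaleR_sum_right)
  show "F_linear (wedge_derivation (A t))" for t
    by (simp add: F_linear_def vec_eq_iff split_paired_all algebra_simps sum_distrib_left)
  show "continuous_on I (\<lambda>t. wedge_derivation (A t) m)" for m
    using assms unfolding F_linear_family_on_def wedge_derivation_def
    by (auto intro!: continuous_intros)
qed

lemma has_vector_derivative_wedge:
  fixes x y :: "real \<Rightarrow> 'f::real_normed_field ^ 'n"
  assumes "(x has_vector_derivative x') (at t within S)"
    and "(y has_vector_derivative y') (at t within S)"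
  shows "((\<lambda>s. wedge (x s) (y s)) has_vector_derivative wedge x' (y t) + wedge (x t) y')
    (at t within S)"
proof (rule has_vector_derivative_vec_lambda, clarify)
  fix i j
  have "((\<lambda>s. x s $ k) has_vector_derivative x' $ k) (at t within S)"
    "((\<lambda>s. y s $ k) has_vector_derivative y' $ k) (at t within S)" for k
    using assms by (simp_all add: bounded_linear.has_vector_derivative[OF bounded_linear_vec_nth])
  then have "((\<lambda>s. x s $ i * y s $ j - x s $ j * y s $ i) has_vector_derivative
      (x t $ i * y' $ j + x' $ i * y t $ j) - (x t $ j * y' $ i + x' $ j * y t $ i)) (at t within S)"
    by (intro has_vector_derivative_diff has_vector_derivative_mult)
  then show "((\<lambda>s. wedge (x s) (y s) $ (i, j)) has_vector_derivative
      (wedge x' (y t) + wedge (x t) y') $ (i, j)) (at t within S)"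
    by (simp add: algebra_simps)
qed

lemma wedge_linear_system_zero:
  fixes x y :: "real \<Rightarrow> 'f::real_normed_field ^ 'n"
  assumes "compact I" "convex I" "continuous_on I p" and A: "F_linear_family_on I A"
    and x': "\<And>t. t \<in> I \<Longrightarrow> (x has_vector_derivative p t *s x t + A t (x t)) (at t within I)"
    and y': "\<And>t. t \<in> I \<Longrightarrow> (y has_vector_derivative r t *s x t + A t (y t)) (at t within I)"
    and "t0 \<in> I" "wedge (x t0) (y t0) = 0" "t \<in> I"
  shows "wedge (x t) (y t) = 0"
proof (rule linear_ode_zero[where w = "\<lambda>t. wedge (x t) (y t)", OF \<open>compact I\<close> \<open>convex I\<close>
      \<open>continuous_on I p\<close> F_linear_family_on_wedge_derivation[OF A] _ assms(7-9)])
  fix t assume "t \<in> I"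
  then have lin: "linear (A t)" "F_linear (A t)"
    using A by (auto simp: F_linear_family_on_def)
  have "wedge (p t *s x t + A t (x t)) (y t) + wedge (x t) (r t *s x t + A t (y t))
      = p t *s wedge (x t) (y t) + (wedge (A t (x t)) (y t) + wedge (x t) (A t (y t)))"
    by (simp add: vec_eq_iff split_paired_all algebra_simps)
  then show "((\<lambda>t. wedge (x t) (y t)) has_vector_derivative
      p t *s wedge (x t) (y t) + wedge_derivation (A t) (wedge (x t) (y t))) (at t within I)"
    using has_vector_derivative_wedge[OF x'[OF \<open>t \<in> I\<close>] y'[OF \<open>t \<in> I\<close>]]
    by (simp add: wedge_derivation[OF lin])
qed

lemma is_chart_inv_into:
  assumes "is_chart c" "q \<in> fst c"
  shows "inv_into (fst c) (snd c) (snd c q) = q"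
  using assms by (simp add: is_chart_def inv_into_f_f)

lemma transition_derivative:
  assumes "F_atlas A" "c \<in> A" "d \<in> A" "p \<in> fst c" "p \<in> fst d"
  shows "linear (frechet_derivative (snd d \<circ> inv_into (fst c) (snd c)) (at (snd c p)))"
    and "F_linear (frechet_derivative (snd d \<circ> inv_into (fst c) (snd c)) (at (snd c p)))"
proof -
  let ?\<tau> = "snd d \<circ> inv_into (fst c) (snd c)"
  define U where "U = snd c ` (fst c \<inter> fst d)"
  have charts: "is_chart c" "is_chart d" and smooth: "F_smooth_on U ?\<tau>"
    using assms(1-3) by (auto simp: F_atlas_def U_def)
  have "U = snd c ` fst c \<inter> inv_into (fst c) (snd c) -` fst d"
    using is_chart_inv_into[OF charts(1)] by (auto simp: U_def)
  then have "open U"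
    using charts by (simp add: is_chart_def continuous_open_preimage)
  moreover have "snd c p \<in> U" using assms(4,5) by (simp add: U_def)
  moreover have "?\<tau> differentiable_on U"
    using smooth unfolding F_smooth_on_def by (blast elim: smooth_map_on.cases)
  ultimately have "?\<tau> differentiable (at (snd c p))"
    by (metis at_within_open differentiable_on_def)
  then show "linear (frechet_derivative ?\<tau> (at (snd c p)))"
    unfolding frechet_derivative_works by (rule has_derivative_linear)
  show "F_linear (frechet_derivative ?\<tau> (at (snd c p)))"
    using smooth \<open>snd c p \<in> U\<close> by (simp add: F_smooth_on_def)
qed

lemma zero_set_iff:
  assumes "F_atlas A" "vector_field A X" "c \<in> A" "p \<in> fst c"
  shows "p \<in> zero_set A X \<longleftrightarrow> X p c = 0"
proof
  assume "X p c = 0"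
  have "X p d = 0" if "d \<in> A" "p \<in> fst d" for d
  proof -
    let ?T = "frechet_derivative (snd d \<circ> inv_into (fst c) (snd c)) (at (snd c p))"
    have "X p d = ?T (X p c)"
      using assms(2-4) that unfolding vector_field_def by blast
    then show ?thesis
      using transition_derivative(1)[OF assms(1,3) that(1) assms(4) that(2)] \<open>X p c = 0\<close>
      by (simp add: linear_0)
  qed
  then show "p \<in> zero_set A X" by (simp add: zero_set_def)
qed (use assms in \<open>simp add: zero_set_def\<close>)

lemma dep_set_iff:
  assumes "F_atlas A" "vector_field A X" "vector_field A Y" "c \<in> A" "p \<in> fst c"
  shows "p \<in> dep_set A X Y \<longleftrightarrow> wedge (X p c) (Y p c) = 0"
proof
  assume "wedge (X p c) (Y p c) = 0"
  then obtain a b where ab: "(a, b) \<noteq> (0, 0)" "a *s X p c + b *s Y p c = 0"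
    by (auto simp: wedge_eq_0_iff_dependent)
  have "a *s X p d + b *s Y p d = 0" if "d \<in> A" "p \<in> fst d" for d
  proof -
    let ?T = "frechet_derivative (snd d \<circ> inv_into (fst c) (snd c)) (at (snd c p))"
    have T: "linear ?T" "F_linear ?T"
      using transition_derivative[OF assms(1,4) that(1) assms(5) that(2)] by simp_all
    have "X p d = ?T (X p c)" "Y p d = ?T (Y p c)"
      using assms(2-5) that unfolding vector_field_def by blast+
    then have "a *s X p d + b *s Y p d = ?T (a *s X p c + b *s Y p c)"
      using T by (simp add: F_linear_def linear_add)
    then show ?thesis using ab(2) T(1) by (simp add: linear_0)
  qed
  then show "p \<in> dep_set A X Y" using ab(1) by (auto simp: dep_set_def)
qed (use assms in \<open>auto simp: dep_set_def wedge_eq_0_iff_dependent\<close>)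

lemma integral_curve_chart_derivative:
  assumes "F_atlas A" "diff_vector_field A W" "integral_curve A V \<gamma> J" "c \<in> A"
    and "I \<subseteq> J" "\<gamma> ` I \<subseteq> fst c" "t \<in> I"
  shows "((\<lambda>s. W (\<gamma> s) c) has_vector_derivative
      frechet_derivative (local_rep W c) (at (snd c (\<gamma> t))) (V (\<gamma> t) c)) (at t within I)"
proof -
  have chart: "is_chart c" using assms(1,4) by (simp add: F_atlas_def)
  have "\<gamma> t \<in> fst c" using assms(6,7) by blast
  have "((snd c \<circ> \<gamma>) has_vector_derivative V (\<gamma> t) c) (at t within I)"
    using assms(3-5,7) \<open>\<gamma> t \<in> fst c\<close> unfolding integral_curve_def
    by (blast intro: has_vector_derivative_within_subset)
  moreover have "local_rep W c differentiable (at (snd c (\<gamma> t)))"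
    using assms(2,4) \<open>\<gamma> t \<in> fst c\<close> by (simp add: diff_vector_field_def F_C1_on_def)
  then have "(local_rep W c has_derivative frechet_derivative (local_rep W c) (at (snd c (\<gamma> t))))
      (at ((snd c \<circ> \<gamma>) t) within (snd c \<circ> \<gamma>) ` I)"
    unfolding frechet_derivative_works by (simp add: has_derivative_at_withinI)
  ultimately have chain: "(local_rep W c \<circ> (snd c \<circ> \<gamma>) has_vector_derivative
      frechet_derivative (local_rep W c) (at (snd c (\<gamma> t))) (V (\<gamma> t) c)) (at t within I)"
    by (rule vector_derivative_diff_chain_within)
  have "W (\<gamma> s) c = (local_rep W c \<circ> (snd c \<circ> \<gamma>)) s" if "s \<in> I" for s
    using assms(6) that is_chart_inv_into[OF chart] by (auto simp: local_rep_def)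
  then show ?thesis
    by (rule has_vector_derivative_transform[OF assms(7) _ chain])
qed

lemma F_linear_family_on_chart_derivative:
  assumes "F_atlas A" "diff_vector_field A W" "c \<in> A" "continuous_on I \<gamma>" "\<gamma> ` I \<subseteq> fst c"
  shows "F_linear_family_on I (\<lambda>t. frechet_derivative (local_rep W c) (at (snd c (\<gamma> t))))"
proof -
  have C1: "F_C1_on (snd c ` fst c) (local_rep W c)"
    using assms(2,3) by (simp add: diff_vector_field_def)
  have "linear (frechet_derivative (local_rep W c) (at (snd c (\<gamma> t))))"
    and "F_linear (frechet_derivative (local_rep W c) (at (snd c (\<gamma> t))))" if "t \<in> I" for t
  proof -
    have "local_rep W c differentiable (at (snd c (\<gamma> t)))"
      using C1 assms(5) that by (auto simp: F_C1_on_def)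
    then show "linear (frechet_derivative (local_rep W c) (at (snd c (\<gamma> t))))"
      unfolding frechet_derivative_works by (rule has_derivative_linear)
    show "F_linear (frechet_derivative (local_rep W c) (at (snd c (\<gamma> t))))"
      using C1 assms(5) that by (auto simp: F_C1_on_def)
  qed
  moreover have "continuous_on I (\<lambda>t. frechet_derivative (local_rep W c) (at (snd c (\<gamma> t))) v)" for v
  proof -
    have "continuous_on (snd c ` fst c) (\<lambda>z. frechet_derivative (local_rep W c) (at z) v)"
      using C1 by (simp add: F_C1_on_def)
    moreover have "is_chart c" using assms(1,3) by (simp add: F_atlas_def)
    then have "continuous_on I (\<lambda>t. snd c (\<gamma> t))"
      using assms(4,5) by (auto simp: is_chart_def intro: continuous_on_compose2)
    ultimately show ?thesis
      by (rule continuous_on_compose2) (use assms(5) in auto)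
  qed
  ultimately show ?thesis by (simp add: F_linear_family_on_def)
qed

lemma tracking_system_propagation:
  fixes x y v :: "real \<Rightarrow> 'f::real_normed_field ^ 'n"
  assumes I: "compact I" "convex I" "t1 \<in> I" "t2 \<in> I"
    and L: "F_linear_family_on I L" and M: "F_linear_family_on I M" and "continuous_on I g"
    and bracket: "\<And>t. t \<in> I \<Longrightarrow> L t (y t) - M t (x t) = g t *s x t"
    and "v = x \<or> v = y"
    and x': "\<And>t. t \<in> I \<Longrightarrow> (x has_vector_derivative L t (v t)) (at t within I)"
    and y': "\<And>t. t \<in> I \<Longrightarrow> (y has_vector_derivative M t (v t)) (at t within I)"
  shows "(x t1 = 0 \<longrightarrow> x t2 = 0) \<and> (wedge (x t1) (y t1) = 0 \<longrightarrow> wedge (x t2) (y t2) = 0)"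
proof -
  have LM: "L t (y t) = g t *s x t + M t (x t)" if "t \<in> I" for t
    using bracket[OF that] by (simp add: diff_eq_eq)
  obtain p r A where p: "continuous_on I p" and A: "F_linear_family_on I A"
    and dx: "\<And>t. t \<in> I \<Longrightarrow> (x has_vector_derivative p t *s x t + A t (x t)) (at t within I)"
    and dy: "\<And>t. t \<in> I \<Longrightarrow> (y has_vector_derivative r t *s x t + A t (y t)) (at t within I)"
  proof (cases "v = x")
    case True
    show thesis
    proof (rule that[of "\<lambda>t. 0" L "\<lambda>t. - g t"])
      fix t assume "t \<in> I"
      show "(x has_vector_derivative 0 *s x t + L t (x t)) (at t within I)"
        using x'[OF \<open>t \<in> I\<close>] True by simp
      show "(y has_vector_derivative - g t *s x t + L t (y t)) (at t within I)"
        using y'[OF \<open>t \<in> I\<close>] True LM[OF \<open>t \<in> I\<close>] by (simp add: vector_smult_lneg)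
    qed (simp_all add: L)
  next
    case False
    with \<open>v = x \<or> v = y\<close> have "v = y" by simp
    show thesis
    proof (rule that[of g M "\<lambda>t. 0"])
      fix t assume "t \<in> I"
      show "(x has_vector_derivative g t *s x t + M t (x t)) (at t within I)"
        using x'[OF \<open>t \<in> I\<close>] \<open>v = y\<close> LM[OF \<open>t \<in> I\<close>] by simp
      show "(y has_vector_derivative 0 *s x t + M t (y t)) (at t within I)"
        using y'[OF \<open>t \<in> I\<close>] \<open>v = y\<close> by simp
    qed (simp_all add: M \<open>continuous_on I g\<close>)
  qed
  show ?thesis
    using linear_ode_zero[OF I(1,2) p A dx I(3) _ I(4)]
      wedge_linear_system_zero[OF I(1,2) p A dx dy I(3) _ I(4)] by blast
qed

lemma tracking_chart_propagation:
  assumes atlas: "F_atlas A" and dX: "diff_vector_field A X" and dY: "diff_vector_field A Y"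
    and "tracks A Y X" and V: "V = X \<or> V = Y" and curve: "integral_curve A V \<gamma> J" and "c \<in> A"
    and "closed_segment t1 t2 \<subseteq> J" "\<gamma> ` closed_segment t1 t2 \<subseteq> fst c"
  shows "(X (\<gamma> t1) c = 0 \<longrightarrow> X (\<gamma> t2) c = 0)
    \<and> (wedge (X (\<gamma> t1) c) (Y (\<gamma> t1) c) = 0 \<longrightarrow> wedge (X (\<gamma> t2) c) (Y (\<gamma> t2) c) = 0)"
proof -
  obtain f where "continuous_on UNIV f"
    and bracket: "\<And>p. p \<in> fst c \<Longrightarrow> lie_bracket_coord Y X p c = f p *s X p c"
    using \<open>tracks A Y X\<close> \<open>c \<in> A\<close> unfolding tracks_def by blast
  let ?I = "closed_segment t1 t2"
  define L where "L t = frechet_derivative (local_rep X c) (at (snd c (\<gamma> t)))" for t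
  define M where "M t = frechet_derivative (local_rep Y c) (at (snd c (\<gamma> t)))" for t
  have "continuous_on ?I \<gamma>"
    using curve assms(8) by (auto simp: integral_curve_def intro: continuous_on_subset)
  show ?thesis
  proof (rule tracking_system_propagation[where L = L and M = M and g = "\<lambda>t. f (\<gamma> t)"
        and v = "\<lambda>t. V (\<gamma> t) c"])
    show "F_linear_family_on ?I L" "F_linear_family_on ?I M"
      unfolding L_def M_def using \<open>continuous_on ?I \<gamma>\<close> atlas dX dY \<open>c \<in> A\<close> assms(9)
      by (blast intro: F_linear_family_on_chart_derivative)+
    show "continuous_on ?I (\<lambda>t. f (\<gamma> t))"
      using \<open>continuous_on UNIV f\<close> \<open>continuous_on ?I \<gamma>\<close> by (auto intro: continuous_on_compose2)
    show "L t (Y (\<gamma> t) c) - M t (X (\<gamma> t) c) = f (\<gamma> t) *s X (\<gamma> t) c" if "t \<in> ?I" for t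
      using bracket[of "\<gamma> t"] that assms(9) by (auto simp: lie_bracket_coord_def L_def M_def)
    show "(\<lambda>t. V (\<gamma> t) c) = (\<lambda>t. X (\<gamma> t) c) \<or> (\<lambda>t. V (\<gamma> t) c) = (\<lambda>t. Y (\<gamma> t) c)"
      using V by auto
    show "((\<lambda>t. X (\<gamma> t) c) has_vector_derivative L t (V (\<gamma> t) c)) (at t within ?I)"
      and "((\<lambda>t. Y (\<gamma> t) c) has_vector_derivative M t (V (\<gamma> t) c)) (at t within ?I)"
      if "t \<in> ?I" for t
      unfolding L_def M_def using that assms(1-3,6-9)
      by (blast intro: integral_curve_chart_derivative)+
  qed simp_all
qed

lemma continuous_on_local_chart:
  assumes "F_atlas A" "continuous_on J \<gamma>" "a \<in> J"
  obtains c e where "c \<in> A" "e > 0" "\<gamma> ` (J \<inter> ball a e) \<subseteq> fst c"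
proof -
  have "\<gamma> a \<in> (\<Union>c\<in>A. fst c)"
    using \<open>F_atlas A\<close> by (simp add: F_atlas_def)
  then obtain c where "c \<in> A" "\<gamma> a \<in> fst c" by blast
  have "open (fst c)"
    using \<open>F_atlas A\<close> \<open>c \<in> A\<close> by (simp add: F_atlas_def is_chart_def)
  with \<open>continuous_on J \<gamma>\<close> have "openin (top_of_set J) (J \<inter> \<gamma> -` fst c)"
    by (rule continuous_openin_preimage_gen)
  then obtain e where "e > 0" and e: "\<forall>s\<in>J. dist s a < e \<longrightarrow> s \<in> J \<inter> \<gamma> -` fst c"
    using \<open>a \<in> J\<close> \<open>\<gamma> a \<in> fst c\<close> unfolding openin_euclidean_subtopology_iff by blast
  have "\<gamma> ` (J \<inter> ball a e) \<subseteq> fst c"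
    using e by (auto simp: dist_commute)
  with \<open>c \<in> A\<close> \<open>e > 0\<close> show thesis by (rule that)
qed

lemma invariantI_chartwise:
  assumes "F_atlas A"
    and S: "\<And>c p. c \<in> A \<Longrightarrow> p \<in> fst c \<Longrightarrow> p \<in> S \<longleftrightarrow> Q p c"
    and propagate: "\<And>\<gamma> J c t1 t2. integral_curve A V \<gamma> J \<Longrightarrow> c \<in> A \<Longrightarrow>
      closed_segment t1 t2 \<subseteq> J \<Longrightarrow> \<gamma> ` closed_segment t1 t2 \<subseteq> fst c \<Longrightarrow>
      Q (\<gamma> t1) c \<Longrightarrow> Q (\<gamma> t2) c"
  shows "invariant A V S"
  unfolding invariant_def
proof (intro allI impI, elim conjE, rule subsetI)
  fix \<gamma> J q
  assume curve: "integral_curve A V \<gamma> J" and "0 \<in> J" "\<gamma> 0 \<in> S" "q \<in> \<gamma> ` J"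
  then obtain b where "b \<in> J" "q = \<gamma> b" by blast
  have "convex J" "continuous_on J \<gamma>"
    using curve by (auto simp: integral_curve_def is_interval_convex)
  have "\<gamma> b \<in> S"
  proof (rule connected_induction_simple[OF convex_connected[OF \<open>convex J\<close>] \<open>0 \<in> J\<close> \<open>b \<in> J\<close>,
        where P = "\<lambda>t. \<gamma> t \<in> S"])
    show "\<gamma> 0 \<in> S" by fact
    fix a assume "a \<in> J"
    then obtain c e where "c \<in> A" "e > 0" and chart: "\<gamma> ` (J \<inter> ball a e) \<subseteq> fst c"
      using continuous_on_local_chart[OF \<open>F_atlas A\<close> \<open>continuous_on J \<gamma>\<close>] by blast
    let ?T = "J \<inter> ball a e"
    have "\<gamma> y \<in> S" if "x \<in> ?T" "y \<in> ?T" "\<gamma> x \<in> S" for x y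
    proof -
      have seg: "closed_segment x y \<subseteq> ?T"
        using that(1,2) \<open>convex J\<close> by (intro closed_segment_subset) (auto intro: convex_Int)
      then have "\<gamma> ` closed_segment x y \<subseteq> fst c" "\<gamma> x \<in> fst c" "\<gamma> y \<in> fst c"
        using chart that(1,2) by auto
      with seg \<open>\<gamma> x \<in> S\<close> show ?thesis
        using S[OF \<open>c \<in> A\<close>] propagate[OF curve \<open>c \<in> A\<close>, of x y] by auto
    qed
    moreover have "openin (top_of_set J) ?T" "a \<in> ?T"
      using \<open>a \<in> J\<close> \<open>e > 0\<close> by (simp_all add: openin_open_Int)
    ultimately show "\<exists>T. openin (top_of_set J) T \<and> a \<in> T \<and>
        (\<forall>x\<in>T. \<forall>y\<in>T. \<gamma> x \<in> S \<longrightarrow> \<gamma> y \<in> S)"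
      by blast
  qed
  then show "q \<in> S" using \<open>q = \<gamma> b\<close> by simp
qed

theorem proposition4p1:
  fixes A :: "(('p::{t2_space, second_countable_topology}) set \<times> ('p \<Rightarrow> 'f::real_normed_field ^ 'n)) set"
    and X Y :: "'p \<Rightarrow> 'p set \<times> ('p \<Rightarrow> 'f ^ 'n) \<Rightarrow> 'f ^ 'n"
  assumes "F_atlas A"
    and "diff_vector_field A X"
    and "diff_vector_field A Y"
    and "tracks A Y X"
  shows "invariant A X (zero_set A X) \<and> invariant A Y (zero_set A X)
       \<and> invariant A X (dep_set A X Y) \<and> invariant A Y (dep_set A X Y)"
proof -
  have "vector_field A X" "vector_field A Y"
    using assms(2,3) by (simp_all add: diff_vector_field_def)
  have "invariant A V (zero_set A X)" "invariant A V (dep_set A X Y)" if "V = X \<or> V = Y" for V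
  proof -
    note propagation = tracking_chart_propagation[OF assms that]
    show "invariant A V (zero_set A X)"
    proof (rule invariantI_chartwise[where Q = "\<lambda>p c. X p c = 0", OF \<open>F_atlas A\<close>])
      show "p \<in> zero_set A X \<longleftrightarrow> X p c = 0" if "c \<in> A" "p \<in> fst c" for c p
        using zero_set_iff[OF \<open>F_atlas A\<close> \<open>vector_field A X\<close> that] .
    qed (use propagation in blast)
    show "invariant A V (dep_set A X Y)"
    proof (rule invariantI_chartwise[where Q = "\<lambda>p c. wedge (X p c) (Y p c) = 0", OF \<open>F_atlas A\<close>])
      show "p \<in> dep_set A X Y \<longleftrightarrow> wedge (X p c) (Y p c) = 0" if "c \<in> A" "p \<in> fst c" for c p
        using dep_set_iff[OF \<open>F_atlas A\<close> \<open>vector_field A X\<close> \<open>vector_field A Y\<close> that] .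
    qed (use propagation in blast)
  qed
  then show ?thesis by blast
qed

end
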